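(* For every $n\ge1$ let $f(n)$ be the minimum of $\Phi(T)$ over all binary phylogenetic trees $T$ with $n$ leaves. Then $f(1)=f(2)=0$ and, for every $n\ge 3$, $$f(n)=f(\lceil n/2\rceil)+f(\lfloor n/2\rfloor)+\binom{\lceil n/2\rceil}{2}+\binom{\lfloor n/2\rfloor}{2}.$$
   Context: A phylogenetic tree with $n$ leaves is a rooted tree whose leaves are bijectively labeled by $\{1,\dots,n\}$; binary means every internal node has exactly two children (the one-leaf tree is a single node). The depth $\delta_T(v)$ is the number of arcs from the root to $v$; for leaves $i,j$, $\varphi_T(i,j)=\delta_T(LCA_T(i,j))$ ($LCA$ = lowest common ancestor), and $\Phi(T)=\sum_{1\le i<j\le n}\varphi_T(i,j)$ is the total cophenetic index. *)

theory Defs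
  imports Main
begin

datatype btree = Leaf nat | Node btree btree

fun leaves :: "btree \<Rightarrow> nat list" where
  "leaves (Leaf k) = [k]"
| "leaves (Node l r) = leaves l @ leaves r"

definition is_phylo :: "nat \<Rightarrow> btree \<Rightarrow> bool" where
  "is_phylo n t \<longleftrightarrow> distinct (leaves t) \<and> set (leaves t) = {1..n}"

fun lca_depth :: "btree \<Rightarrow> nat \<Rightarrow> nat \<Rightarrow> nat" where
  "lca_depth (Leaf k) i j = 0"
| "lca_depth (Node l r) i j =
     (if i \<in> set (leaves l) \<and> j \<in> set (leaves l) then 1 + lca_depth l i j
      else if i \<in> set (leaves r) \<and> j \<in> set (leaves r) then 1 + lca_depth r i j
      else 0)"

definition cophenetic :: "nat \<Rightarrow> btree \<Rightarrow> nat" where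
  "cophenetic n t = (\<Sum>(i,j)\<in>{(i,j). 1 \<le> i \<and> i < j \<and> j \<le> n}. lca_depth t i j)"

definition min_cophenetic :: "nat \<Rightarrow> nat" where
  "min_cophenetic n = Min {cophenetic n t | t. is_phylo n t}"

end

theory Submission
  imports Defs
begin

(* The minimum total cophenetic index is attained by the maximally balanced tree.

   1. The cophenetic index of a tree with distinct leaves depends only on its shape:
      it satisfies the recursion  coph (Node l r) = coph l + coph r + C(|l|,2) + C(|r|,2),
      because every pair of leaves inside a subtree gains one unit of depth at the root
      and pairs split by the root contribute 0.  Any shape can be relabelled into a
      phylogenetic tree, so the minimum over phylogenetic trees with n leaves is the
      minimum of this recursive cost over all shapes with n leaves.
   2. Let balanced_cost n be the cost of the balanced tree (split n into ceil/floor halves).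
      Its increments balanced_cost (n+1) - balanced_cost n = halving_sum n are monotone,
      so split_cost a = balanced_cost a + C(a,2) is convex and the balanced split
      minimises split_cost a + split_cost b among all a + b = n.
   3. By induction on the tree, balanced_cost is a lower bound for the cost of every shape;
      the balanced tree attains it.  Hence min_cophenetic n = balanced_cost n for n >= 1,
      and the recursion of the theorem is the defining recursion of balanced_cost. *)

fun tree_size :: "btree \<Rightarrow> nat" where
  "tree_size (Leaf _) = 1"
| "tree_size (Node l r) = tree_size l + tree_size r"

fun coph_rec :: "btree \<Rightarrow> nat" where
  "coph_rec (Leaf _) = 0"
| "coph_rec (Node l r) = coph_rec l + coph_rec r + (tree_size l choose 2) + (tree_size r choose 2)"

lemma tree_size_pos: "tree_size t \<ge> 1"
  by (induction t) auto

lemma tree_size_eq_length: "tree_size t = length (leaves t)"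
  by (induction t) auto

lemma choose_two_Suc: "Suc a choose 2 = (a choose 2) + a"
  by (simp add: numeral_2_eq_2)

text \<open>A crude polynomial bound; it only serves to show that the set of cophenetic
  values over which the minimum is taken is finite.\<close>
lemma coph_rec_le_cube: "coph_rec t \<le> tree_size t * tree_size t * tree_size t"
proof (induction t)
  case (Node l r)
  let ?a = "tree_size l" and ?b = "tree_size r"
  have choose_le_square: "x choose 2 \<le> x * x" for x :: nat
    by (simp add: choose_two) (meson div_le_dividend diff_le_self mult_le_mono2 order_trans)
  have "?a * ?a \<le> ?a * ?a * ?b" "?b * ?b \<le> ?a * ?b * ?b"
    using tree_size_pos[of l] tree_size_pos[of r] by simp_all
  then have "?a choose 2 \<le> ?a * ?a * ?b" "?b choose 2 \<le> ?a * ?b * ?b"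
    using choose_le_square[of ?a] choose_le_square[of ?b] by linarith+
  moreover have "(?a + ?b) * (?a + ?b) * (?a + ?b)
      = ?a * ?a * ?a + ?b * ?b * ?b + 3 * (?a * ?a * ?b) + 3 * (?a * ?b * ?b)"
    by (simp add: algebra_simps)
  ultimately show ?case using Node.IH by simp
qed simp

section \<open>The cophenetic index depends only on the shape\<close>

definition ordered_pairs :: "nat set \<Rightarrow> (nat \<times> nat) set" where
  "ordered_pairs X = {(i, j). i \<in> X \<and> j \<in> X \<and> i < j}"

lemma finite_ordered_pairs: "finite X \<Longrightarrow> finite (ordered_pairs X)"
  by (rule finite_subset[of _ "X \<times> X"]) (auto simp: ordered_pairs_def)

text \<open>Ordered pairs correspond to 2-element subsets.\<close>
lemma card_ordered_pairs:
  assumes "finite X"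
  shows "card (ordered_pairs X) = card X choose 2"
proof -
  let ?two_subsets = "{B. B \<subseteq> X \<and> card B = 2}"
  let ?as_set = "\<lambda>(i :: nat, j). {i, j}"
  have inj: "inj_on ?as_set (ordered_pairs X)"
    by (auto simp: inj_on_def ordered_pairs_def doubleton_eq_iff)
  have "?as_set ` ordered_pairs X = ?two_subsets"
  proof
    show "?as_set ` ordered_pairs X \<subseteq> ?two_subsets"
      by (auto simp: ordered_pairs_def)
    show "?two_subsets \<subseteq> ?as_set ` ordered_pairs X"
    proof
      fix B assume "B \<in> ?two_subsets"
      then obtain x y where B: "B = {x, y}" "x \<noteq> y" "B \<subseteq> X"
        by (auto simp: card_2_iff)
      then have "(min x y, max x y) \<in> ordered_pairs X"
        by (auto simp: ordered_pairs_def min_def max_def)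
      moreover have "B = ?as_set (min x y, max x y)"
        using B by (auto simp: min_def max_def)
      ultimately show "B \<in> ?as_set ` ordered_pairs X" by (rule rev_image_eqI)
    qed
  qed
  then have "card (ordered_pairs X) = card ?two_subsets"
    using card_image[OF inj] by simp
  also have "\<dots> = card X choose 2" using assms by (rule n_subsets)
  finally show ?thesis .
qed

lemma sum_eq_card_plus:
  fixes f g :: "'a \<Rightarrow> nat"
  assumes "\<And>x. x \<in> A \<Longrightarrow> f x = 1 + g x"
  shows "sum f A = card A + sum g A"
proof -
  have "sum f A = (\<Sum>x\<in>A. 1 + g x)" using assms by (rule sum.cong[OF refl])
  also have "\<dots> = card A + sum g A" by (simp only: sum.distrib) simp
  finally show ?thesis .
qed

text \<open>At the root, pairs within one subtree gain depth 1 (giving the binomial terms),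
  pairs separated by the root contribute 0.\<close>
lemma lca_depth_sum_eq_coph_rec:
  "distinct (leaves t) \<Longrightarrow>
     (\<Sum>p\<in>ordered_pairs (set (leaves t)). lca_depth t (fst p) (snd p)) = coph_rec t"
proof (induction t)
  case (Leaf k)
  have "ordered_pairs {k} = {}" by (auto simp: ordered_pairs_def)
  then show ?case by simp
next
  case (Node l r)
  define L where "L = set (leaves l)"
  define R where "R = set (leaves r)"
  have dl: "distinct (leaves l)" and dr: "distinct (leaves r)" and disj: "L \<inter> R = {}"
    using Node.prems by (auto simp: L_def R_def)
  have fin: "finite (ordered_pairs L)" "finite (ordered_pairs R)"
    by (auto simp: L_def R_def intro: finite_ordered_pairs)
  let ?depth = "\<lambda>p. lca_depth (Node l r) (fst p) (snd p)"
  have split_pairs_vanish: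
    "\<forall>p \<in> ordered_pairs (L \<union> R) - (ordered_pairs L \<union> ordered_pairs R). ?depth p = 0"
    by (auto simp: ordered_pairs_def L_def R_def)
  have in_left: "\<And>p. p \<in> ordered_pairs L \<Longrightarrow> ?depth p = 1 + lca_depth l (fst p) (snd p)"
    by (auto simp: ordered_pairs_def L_def)
  have in_right: "\<And>p. p \<in> ordered_pairs R \<Longrightarrow> ?depth p = 1 + lca_depth r (fst p) (snd p)"
    using disj by (auto simp: ordered_pairs_def L_def R_def)
  have "(\<Sum>p\<in>ordered_pairs (L \<union> R). ?depth p)
      = (\<Sum>p\<in>ordered_pairs L \<union> ordered_pairs R. ?depth p)"
    using split_pairs_vanish
    by (intro sum.mono_neutral_right finite_ordered_pairs) (auto simp: ordered_pairs_def L_def R_def)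
  also have "\<dots> = (\<Sum>p\<in>ordered_pairs L. ?depth p) + (\<Sum>p\<in>ordered_pairs R. ?depth p)"
    using disj fin by (intro sum.union_disjoint) (auto simp: ordered_pairs_def)
  also have "\<dots> = (card (ordered_pairs L) + coph_rec l) + (card (ordered_pairs R) + coph_rec r)"
    using sum_eq_card_plus[of "ordered_pairs L" ?depth, OF in_left]
      sum_eq_card_plus[of "ordered_pairs R" ?depth, OF in_right] Node.IH(1)[OF dl] Node.IH(2)[OF dr]
    by (simp only: L_def R_def)
  finally show ?case
    using dl dr by (simp add: card_ordered_pairs L_def R_def tree_size_eq_length distinct_card)
qed

lemma cophenetic_phylo:
  assumes "is_phylo n t"
  shows "tree_size t = n" and "cophenetic n t = coph_rec t"
proof -
  have dist: "distinct (leaves t)" and labels: "set (leaves t) = {1..n}"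
    using assms by (auto simp: is_phylo_def)
  show "tree_size t = n"
    using distinct_card[OF dist] labels by (simp add: tree_size_eq_length)
  have "{(i, j). 1 \<le> i \<and> i < j \<and> j \<le> n} = ordered_pairs (set (leaves t))"
    using labels by (auto simp: ordered_pairs_def)
  then show "cophenetic n t = coph_rec t"
    using lca_depth_sum_eq_coph_rec[OF dist] by (simp add: cophenetic_def case_prod_beta)
qed

fun relabel :: "nat \<Rightarrow> btree \<Rightarrow> btree" where
  "relabel k (Leaf _) = Leaf k"
| "relabel k (Node l r) = Node (relabel k l) (relabel (k + tree_size l) r)"

lemma relabel_props:
  "leaves (relabel k t) = [k..<k + tree_size t] \<and> coph_rec (relabel k t) = coph_rec t
   \<and> tree_size (relabel k t) = tree_size t"
proof (induction t arbitrary: k)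
  case (Node l r)
  then show ?case
    using upt_add_eq_append[of k "k + tree_size l" "tree_size r"] by (simp add: add.assoc)
qed simp

lemma phylo_relabel: "is_phylo (tree_size t) (relabel 1 t)"
  using relabel_props[of 1 t] by (auto simp: is_phylo_def)

section \<open>The cost of the balanced tree\<close>

function balanced_cost :: "nat \<Rightarrow> nat" where
  "balanced_cost n = (if n \<le> 1 then 0 else
     balanced_cost ((n + 1) div 2) + balanced_cost (n div 2)
       + ((n + 1) div 2 choose 2) + (n div 2 choose 2))"
  by auto
termination by (relation "measure id") auto

declare balanced_cost.simps[simp del]

lemma balanced_cost_le_one: "n \<le> 1 \<Longrightarrow> balanced_cost n = 0"
  by (simp add: balanced_cost.simps)

lemma balanced_cost_rec:
  "n \<ge> 2 \<Longrightarrow> balanced_cost n = balanced_cost ((n + 1) div 2) + balanced_cost (n div 2)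
     + ((n + 1) div 2 choose 2) + (n div 2 choose 2)"
  by (simp add: balanced_cost.simps[of n])

lemma balanced_cost_two: "balanced_cost 2 = 0"
  by (simp add: balanced_cost_rec balanced_cost_le_one)

text \<open>halving_sum n = floor(n/2) + floor(n/4) + ...; it is the increment of balanced_cost.\<close>
fun halving_sum :: "nat \<Rightarrow> nat" where
  "halving_sum n = (if n = 0 then 0 else n div 2 + halving_sum (n div 2))"

declare halving_sum.simps[simp del]

lemma halving_sum_0 [simp]: "halving_sum 0 = 0"
  by (simp add: halving_sum.simps)

lemma halving_sum_eq: "halving_sum n = n div 2 + halving_sum (n div 2)"
  by (simp add: halving_sum.simps[of n])

lemma halving_sum_mono: "a \<le> b \<Longrightarrow> halving_sum a \<le> halving_sum b"
proof (induction b arbitrary: a rule: less_induct)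
  case (less b)
  show ?case
  proof (cases "b = 0")
    case False
    then have "halving_sum (a div 2) \<le> halving_sum (b div 2)"
      using less by (simp add: div_le_mono)
    then show ?thesis
      using halving_sum_eq[of a] halving_sum_eq[of b] div_le_mono[OF less.prems, of 2] by linarith
  qed (use less.prems in simp)
qed

lemma balanced_cost_Suc: "balanced_cost (Suc n) = balanced_cost n + halving_sum n"
proof (induction n rule: less_induct)
  case (less n)
  consider "n \<le> 1" | k where "n = 2 * k" "k \<ge> 1" | k where "n = 2 * k + 1" "k \<ge> 1"
  proof -
    have "n = 2 * (n div 2) \<or> n = 2 * (n div 2) + 1" by presburger
    then show ?thesis using that by (cases "n div 2 = 0") auto
  qed
  then show ?case
  proof cases
    case 1
    then show ?thesis
      using balanced_cost_two halving_sum_eq[of 1]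
      by (auto simp: le_Suc_eq balanced_cost_le_one numeral_2_eq_2)
  next
    case 2
    have "balanced_cost (Suc k) = balanced_cost k + halving_sum k" using less.IH 2 by simp
    then show ?thesis
      using 2 balanced_cost_rec[of "Suc n"] balanced_cost_rec[of n] halving_sum_eq[of n]
        choose_two_Suc[of k] by simp
  next
    case 3
    have "balanced_cost (Suc k) = balanced_cost k + halving_sum k" using less.IH 3 by simp
    then show ?thesis
      using 3 balanced_cost_rec[of "Suc n"] balanced_cost_rec[of n] halving_sum_eq[of n]
        choose_two_Suc[of k] by simp
  qed
qed

section \<open>Convexity: the balanced split is optimal\<close>

text \<open>The cost contributed by a subtree of a leaves hanging below the root,
  when that subtree is balanced.\<close>
definition split_cost :: "nat \<Rightarrow> nat" where
  "split_cost a = balanced_cost a + (a choose 2)"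

lemma balanced_cost_split:
  "n \<ge> 2 \<Longrightarrow> balanced_cost n = split_cost ((n + 1) div 2) + split_cost (n div 2)"
  by (simp add: balanced_cost_rec split_cost_def)

lemma split_cost_Suc: "split_cost (Suc a) = split_cost a + halving_sum a + a"
  by (simp add: split_cost_def balanced_cost_Suc choose_two_Suc)

text \<open>Discrete convexity: moving one leaf from the larger to the smaller side never
  increases the cost, since the increments of split_cost are monotone.\<close>
lemma split_cost_exchange:
  "b \<le> a \<Longrightarrow> split_cost a + split_cost (Suc b) \<le> split_cost (Suc a) + split_cost b"
  using split_cost_Suc[of a] split_cost_Suc[of b] halving_sum_mono[of b a] by simp

lemma balanced_split_optimal:
  assumes "a + b = n" "b \<le> a"
  shows "split_cost ((n + 1) div 2) + split_cost (n div 2) \<le> split_cost a + split_cost b"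
  using assms
proof (induction "a - b" arbitrary: a b rule: less_induct)
  case less
  show ?case
  proof (cases "a \<le> b + 1")
    case True
    then have "a = (n + 1) div 2" "b = n div 2" using less.prems by auto
    then show ?thesis by simp
  next
    case False
    then obtain a' where a': "a = Suc a'" "Suc b \<le> a'"
      by (metis Suc_eq_plus1 Suc_le_D not_less_eq_eq)
    have "split_cost ((n + 1) div 2) + split_cost (n div 2) \<le> split_cost a' + split_cost (Suc b)"
      using less.hyps[of a' "Suc b"] a' less.prems by simp
    also have "\<dots> \<le> split_cost a + split_cost b"
      using split_cost_exchange[of b a'] a' by simp
    finally show ?thesis .
  qed
qed

section \<open>Lower bound and attainment\<close>

lemma balanced_cost_lower_bound: "balanced_cost (tree_size t) \<le> coph_rec t"
proof (induction t)
  case (Leaf x)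
  then show ?case by (simp add: balanced_cost_le_one)
next
  case (Node l r)
  let ?a = "tree_size l" and ?b = "tree_size r"
  have two: "tree_size (Node l r) \<ge> 2" using tree_size_pos[of l] tree_size_pos[of r] by simp
  have "balanced_cost (?a + ?b) \<le> split_cost ?a + split_cost ?b"
    using balanced_cost_split[OF two[simplified]] balanced_split_optimal[of ?a ?b]
      balanced_split_optimal[of ?b ?a] by (cases "?b \<le> ?a") (simp_all add: add.commute)
  also have "\<dots> \<le> coph_rec (Node l r)" using Node.IH by (simp add: split_cost_def)
  finally show ?case by simp
qed

function balanced_tree :: "nat \<Rightarrow> btree" where
  "balanced_tree n = (if n \<le> 1 then Leaf 0
     else Node (balanced_tree ((n + 1) div 2)) (balanced_tree (n div 2)))"
  by auto
termination by (relation "measure id") auto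

declare balanced_tree.simps[simp del]

lemma balanced_tree_props:
  "n \<ge> 1 \<Longrightarrow> tree_size (balanced_tree n) = n \<and> coph_rec (balanced_tree n) = balanced_cost n"
proof (induction n rule: balanced_tree.induct)
  case (1 n)
  show ?case
  proof (cases "n \<le> 1")
    case True
    then show ?thesis using 1 by (simp add: balanced_tree.simps[of n] balanced_cost_le_one)
  next
    case False
    then show ?thesis
      using 1 by (simp add: balanced_tree.simps[of n] balanced_cost_rec[of n])
  qed
qed

theorem min_cophenetic_eq_balanced_cost:
  assumes "n \<ge> 1"
  shows "min_cophenetic n = balanced_cost n"
proof -
  let ?values = "{cophenetic n t | t. is_phylo n t}"
  have "?values \<subseteq> {..n * n * n}"
    using cophenetic_phylo coph_rec_le_cube by fastforce
  then have finite: "finite ?values" by (rule finite_subset) simp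
  define witness where "witness = relabel 1 (balanced_tree n)"
  have "is_phylo n witness"
    using phylo_relabel[of "balanced_tree n"] balanced_tree_props[OF assms]
    by (simp add: witness_def)
  moreover have "cophenetic n witness = balanced_cost n"
    using cophenetic_phylo(2)[OF \<open>is_phylo n witness\<close>] relabel_props[of 1 "balanced_tree n"]
      balanced_tree_props[OF assms] by (simp add: witness_def)
  ultimately have attained: "balanced_cost n \<in> ?values" by force
  have lower: "\<forall>v\<in>?values. balanced_cost n \<le> v"
    using cophenetic_phylo balanced_cost_lower_bound by fastforce
  show ?thesis unfolding min_cophenetic_def using finite attained lower by (intro Min_eqI) auto
qed

theorem mainTheorem11:
  shows "min_cophenetic 1 = 0 \<and> min_cophenetic 2 = 0 \<and>
    (\<forall>n::nat. n \<ge> 3 \<longrightarrow>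
       min_cophenetic n = min_cophenetic ((n + 1) div 2) + min_cophenetic (n div 2)
         + (((n + 1) div 2) choose 2) + ((n div 2) choose 2))"
proof (intro conjI allI impI)
  show "min_cophenetic 1 = 0"
    by (simp add: min_cophenetic_eq_balanced_cost balanced_cost_le_one)
  show "min_cophenetic 2 = 0"
    by (simp add: min_cophenetic_eq_balanced_cost balanced_cost_two)
  fix n :: nat
  assume "n \<ge> 3"
  then have "n \<ge> 1" "(n + 1) div 2 \<ge> 1" "n div 2 \<ge> 1" by auto
  then show "min_cophenetic n = min_cophenetic ((n + 1) div 2) + min_cophenetic (n div 2)
      + (((n + 1) div 2) choose 2) + ((n div 2) choose 2)"
    using \<open>n \<ge> 3\<close> by (simp add: min_cophenetic_eq_balanced_cost balanced_cost_rec)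
qed

end
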